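(* Let $n\geq5$ and let $U$ be a monomial. Then $x_n^2x_{n-2}^2U\in G(J(P_n)^2)$ if and only if $U\in G(J(P_{n-3})^2)$.
   Context: For $m\geq1$, $P_m$ is the path graph on vertices $x_1,\ldots,x_m$ with edges $\{x_i,x_{i+1}\}$; $J(P_m)$ is its cover ideal in a polynomial ring over a field, generated by the monomials $\prod_{x\in C}x$ with $C$ a minimal vertex cover of $P_m$; $G(I)$ denotes the set of minimal monomial generators of a monomial ideal $I$. *)

theory Defs
  imports Main "HOL-Library.Multiset"
begin

text \<open>Monomials in the variables x_1, x_2, ... are encoded as finite multisets of
variable indices (the exponent of x_i is the multiplicity of i). Monomial u divides
monomial v iff u is a sub-multiset of v; the product of monomials is multiset sum.
A monomial ideal is represented by the set of monomials it contains.\<close>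

type_synonym monomial = "nat multiset"

definition mono_ideal :: "monomial set \<Rightarrow> monomial set" where
  "mono_ideal S = {m. \<exists>s\<in>S. s \<subseteq># m}"

definition mingens :: "monomial set \<Rightarrow> monomial set" where
  "mingens I = {m \<in> I. \<forall>m'\<in>I. m' \<subseteq># m \<longrightarrow> m' = m}"

definition ideal_square :: "monomial set \<Rightarrow> monomial set" where
  "ideal_square I = mono_ideal {a + b | a b. a \<in> I \<and> b \<in> I}"

definition path_vertex_cover :: "nat \<Rightarrow> nat set \<Rightarrow> bool" where
  "path_vertex_cover m C \<longleftrightarrow> C \<subseteq> {1..m} \<and> (\<forall>i. 1 \<le> i \<and> i + 1 \<le> m \<longrightarrow> i \<in> C \<or> i + 1 \<in> C)"

definition min_path_vertex_cover :: "nat \<Rightarrow> nat set \<Rightarrow> bool" where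
  "min_path_vertex_cover m C \<longleftrightarrow> path_vertex_cover m C \<and>
     (\<forall>D. path_vertex_cover m D \<and> D \<subseteq> C \<longrightarrow> D = C)"

definition cover_ideal_path :: "nat \<Rightarrow> monomial set" where
  "cover_ideal_path m = mono_ideal {mset_set C | C. min_path_vertex_cover m C}"

end

theory Submission
  imports Defs
begin

text \<open>Write \<open>n = k + 3\<close>. A minimal vertex cover of \<open>P\<^bsub>k+3\<^esub>\<close> misses the vertex \<open>k+2\<close>
exactly when it contains both \<open>k+1\<close> and \<open>k+3\<close>, and these covers are precisely the sets
\<open>D \<union> {k+1, k+3}\<close> with \<open>D\<close> a minimal vertex cover of \<open>P\<^bsub>k\<^esub>\<close>. Among the products of two
cover monomials of \<open>P\<^bsub>k+3\<^esub>\<close>, those divisible by \<open>x\<^bsub>k+1\<^esub>\<^sup>2 x\<^bsub>k+3\<^esub>\<^sup>2\<close> are therefore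
exactly those not divisible by \<open>x\<^bsub>k+2\<^esub>\<close>, namely \<open>x\<^bsub>k+1\<^esub>\<^sup>2 x\<^bsub>k+3\<^esub>\<^sup>2\<close> times a product
of two cover monomials of \<open>P\<^bsub>k\<^esub>\<close>. As non-divisibility by \<open>x\<^bsub>k+2\<^esub>\<close> passes to divisors,
minimality transfers in both directions.\<close>

definition pair_sums :: "monomial set \<Rightarrow> monomial set" where
  "pair_sums S = {a + b | a b. a \<in> S \<and> b \<in> S}"

definition path_cover_monomials :: "nat \<Rightarrow> monomial set" where
  "path_cover_monomials m = {mset_set C | C. min_path_vertex_cover m C}"

lemma mingens_mono_ideal: "mingens (mono_ideal T) = mingens T"
  unfolding mingens_def mono_ideal_def
  by (auto intro: subset_mset.order_trans)

lemma ideal_square_mono_ideal: "ideal_square (mono_ideal S) = mono_ideal (pair_sums S)"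
proof (intro set_eqI iffI)
  fix m assume "m \<in> ideal_square (mono_ideal S)"
  then obtain a b s s' where "a + b \<subseteq># m" "s \<in> S" "s' \<in> S" "s \<subseteq># a" "s' \<subseteq># b"
    unfolding ideal_square_def mono_ideal_def by blast
  then have "s + s' \<subseteq># m" by (meson subset_mset.add_mono subset_mset.order_trans)
  with \<open>s \<in> S\<close> \<open>s' \<in> S\<close> show "m \<in> mono_ideal (pair_sums S)"
    unfolding mono_ideal_def pair_sums_def by blast
next
  fix m assume "m \<in> mono_ideal (pair_sums S)"
  then show "m \<in> ideal_square (mono_ideal S)"
    unfolding ideal_square_def mono_ideal_def pair_sums_def by blast
qed

lemma mingens_square_cover_ideal_path:
  "mingens (ideal_square (cover_ideal_path m)) = mingens (pair_sums (path_cover_monomials m))"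
  unfolding cover_ideal_path_def ideal_square_mono_ideal mingens_mono_ideal path_cover_monomials_def ..

lemma mingens_translate:
  assumes avoiding: "\<And>t. t \<in> B \<and> x \<notin># t \<longleftrightarrow> t \<in> (+) M ` A"
    and above: "\<And>t. t \<in> B \<Longrightarrow> M \<subseteq># t \<Longrightarrow> x \<notin># t"
  shows "M + U \<in> mingens B \<longleftrightarrow> U \<in> mingens A"
proof
  assume min: "M + U \<in> mingens B"
  then have "M + U \<in> B" unfolding mingens_def by blast
  moreover have "x \<notin># M + U" using above[OF \<open>M + U \<in> B\<close>] by simp
  ultimately have "M + U \<in> (+) M ` A" using avoiding by blast
  then have "U \<in> A" by auto
  moreover have "t = U" if "t \<in> A" "t \<subseteq># U" for t
  proof -
    have "M + t \<in> B" using avoiding \<open>t \<in> A\<close> by blast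
    moreover have "M + t \<subseteq># M + U" using \<open>t \<subseteq># U\<close> by simp
    ultimately have "M + t = M + U" using min unfolding mingens_def by blast
    then show ?thesis by simp
  qed
  ultimately show "U \<in> mingens A" unfolding mingens_def by blast
next
  assume min: "U \<in> mingens A"
  then have "M + U \<in> B" and x_notin: "x \<notin># M + U"
    using avoiding unfolding mingens_def by blast+
  moreover have "t = M + U" if "t \<in> B" "t \<subseteq># M + U" for t
  proof -
    have "x \<notin># t" using x_notin \<open>t \<subseteq># M + U\<close> by (meson mset_subset_eqD)
    with \<open>t \<in> B\<close> obtain s where "s \<in> A" "t = M + s" using avoiding by blast
    with \<open>t \<subseteq># M + U\<close> min show ?thesis unfolding mingens_def by simp
  qed
  ultimately show "M + U \<in> mingens B" unfolding mingens_def by blast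
qed

lemma pair_sums_avoiding:
  assumes "\<And>c. c \<in> C \<and> x \<notin># c \<longleftrightarrow> c \<in> (+) N ` D"
  shows "t \<in> pair_sums C \<and> x \<notin># t \<longleftrightarrow> t \<in> (+) (N + N) ` pair_sums D"
proof
  assume "t \<in> pair_sums C \<and> x \<notin># t"
  then obtain a b where "a \<in> C" "b \<in> C" "x \<notin># a" "x \<notin># b" "t = a + b"
    unfolding pair_sums_def by auto
  then obtain a' b' where "a' \<in> D" "b' \<in> D" "a = N + a'" "b = N + b'"
    using assms by blast
  then have "t = (N + N) + (a' + b')" using \<open>t = a + b\<close> by (simp add: ac_simps)
  with \<open>a' \<in> D\<close> \<open>b' \<in> D\<close> show "t \<in> (+) (N + N) ` pair_sums D"
    unfolding pair_sums_def by blast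
next
  assume "t \<in> (+) (N + N) ` pair_sums D"
  then obtain a' b' where "a' \<in> D" "b' \<in> D" "t = (N + a') + (N + b')"
    unfolding pair_sums_def by (auto simp: ac_simps)
  moreover have "N + a' \<in> C" "x \<notin># N + a'" "N + b' \<in> C" "x \<notin># N + b'"
    using assms \<open>a' \<in> D\<close> \<open>b' \<in> D\<close> by blast+
  ultimately show "t \<in> pair_sums C \<and> x \<notin># t"
    unfolding pair_sums_def by auto
qed

lemma min_path_vertex_cover_subset: "min_path_vertex_cover m C \<Longrightarrow> C \<subseteq> {1..m}"
  unfolding min_path_vertex_cover_def path_vertex_cover_def by blast

lemma path_vertex_cover_extend:
  assumes "path_vertex_cover k D"
  shows "path_vertex_cover (k + 3) (D \<union> {k + 1, k + 3})"
proof -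
  have "i \<in> D \<union> {k + 1, k + 3} \<or> i + 1 \<in> D \<union> {k + 1, k + 3}"
    if "1 \<le> i" "i + 1 \<le> k + 3" for i
  proof (cases "i + 1 \<le> k")
    case True
    then show ?thesis using assms \<open>1 \<le> i\<close> unfolding path_vertex_cover_def by blast
  next
    case False
    then have "i = k \<or> i = k + 1 \<or> i = k + 2" using that by auto
    then show ?thesis by auto
  qed
  then show ?thesis using assms unfolding path_vertex_cover_def by auto
qed

lemma path_vertex_cover_gap:
  assumes "path_vertex_cover (k + 3) C" "k + 2 \<notin> C"
  shows "k + 1 \<in> C" "k + 3 \<in> C"
proof -
  have "i \<in> C \<or> i + 1 \<in> C" if "1 \<le> i" "i + 1 \<le> k + 3" for i
    using assms(1) that unfolding path_vertex_cover_def by blast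
  from this[of "k + 1"] this[of "k + 2"] assms(2) show "k + 1 \<in> C" "k + 3 \<in> C"
    by (simp_all add: numeral_3_eq_3)
qed

lemma min_path_vertex_cover_extend:
  assumes "min_path_vertex_cover k D"
  shows "min_path_vertex_cover (k + 3) (D \<union> {k + 1, k + 3})"
  unfolding min_path_vertex_cover_def
proof (intro conjI allI impI)
  show "path_vertex_cover (k + 3) (D \<union> {k + 1, k + 3})"
    using assms path_vertex_cover_extend unfolding min_path_vertex_cover_def by blast
  fix E assume E: "path_vertex_cover (k + 3) E \<and> E \<subseteq> D \<union> {k + 1, k + 3}"
  have D_min: "\<And>E. path_vertex_cover k E \<Longrightarrow> E \<subseteq> D \<Longrightarrow> E = D"
    using assms unfolding min_path_vertex_cover_def by blast
  have "D \<subseteq> {1..k}" using assms by (rule min_path_vertex_cover_subset)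
  then have "k + 2 \<notin> D \<union> {k + 1, k + 3}" by auto
  then have "k + 2 \<notin> E" using E by blast
  then have "k + 1 \<in> E" "k + 3 \<in> E" using E path_vertex_cover_gap by blast+
  moreover have "path_vertex_cover k (E \<inter> {1..k})"
    using E unfolding path_vertex_cover_def by auto
  then have "E \<inter> {1..k} = D" by (rule D_min) (use E in auto)
  ultimately show "E = D \<union> {k + 1, k + 3}" using E by blast
qed

lemma min_path_vertex_cover_restrict:
  assumes "min_path_vertex_cover (k + 3) C" "k + 2 \<notin> C"
  shows "min_path_vertex_cover k (C - {k + 1, k + 3})"
proof -
  let ?D = "C - {k + 1, k + 3}"
  have C: "path_vertex_cover (k + 3) C"
    and C_min: "\<And>E. path_vertex_cover (k + 3) E \<Longrightarrow> E \<subseteq> C \<Longrightarrow> E = C"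
    using assms(1) unfolding min_path_vertex_cover_def by blast+
  have top: "k + 1 \<in> C" "k + 3 \<in> C" using path_vertex_cover_gap[OF C assms(2)] .
  have "x \<in> {1..k}" if "x \<in> ?D" for x
  proof -
    have "1 \<le> x" "x \<le> k + 3" "x \<notin> {k + 1, k + 2, k + 3}"
      using that min_path_vertex_cover_subset[OF assms(1)] assms(2) by auto
    then show ?thesis by auto
  qed
  then have "?D \<subseteq> {1..k}" by blast
  then have "path_vertex_cover k ?D"
    using C unfolding path_vertex_cover_def by fastforce
  moreover have "E = ?D" if E: "path_vertex_cover k E" "E \<subseteq> ?D" for E
  proof -
    have "E \<union> {k + 1, k + 3} = C"
      using C_min path_vertex_cover_extend[OF E(1)] E(2) top by blast
    with E(2) show ?thesis by blast
  qed
  ultimately show ?thesis unfolding min_path_vertex_cover_def by blast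
qed

lemma min_path_vertex_cover_gap_iff:
  assumes "min_path_vertex_cover (k + 3) C"
  shows "k + 2 \<notin> C \<longleftrightarrow> k + 1 \<in> C \<and> k + 3 \<in> C"
proof
  show "k + 2 \<notin> C \<Longrightarrow> k + 1 \<in> C \<and> k + 3 \<in> C"
    using assms path_vertex_cover_gap unfolding min_path_vertex_cover_def by blast
next
  assume top: "k + 1 \<in> C \<and> k + 3 \<in> C"
  have "i \<in> C - {k + 2} \<or> i + 1 \<in> C - {k + 2}" if "1 \<le> i" "i + 1 \<le> k + 3" for i
  proof (cases "i = k + 1 \<or> i = k + 2")
    case True
    then show ?thesis using top by (auto simp: numeral_3_eq_3)
  next
    case False
    then show ?thesis
      using assms that unfolding min_path_vertex_cover_def path_vertex_cover_def by auto
  qed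
  then have "path_vertex_cover (k + 3) (C - {k + 2})"
    using assms unfolding min_path_vertex_cover_def path_vertex_cover_def by auto
  then have "C - {k + 2} = C" using assms unfolding min_path_vertex_cover_def by blast
  then show "k + 2 \<notin> C" by blast
qed

lemma min_path_vertex_cover_avoiding_iff:
  "min_path_vertex_cover (k + 3) C \<and> k + 2 \<notin> C \<longleftrightarrow>
    (\<exists>D. min_path_vertex_cover k D \<and> C = D \<union> {k + 1, k + 3})"
proof
  assume C: "min_path_vertex_cover (k + 3) C \<and> k + 2 \<notin> C"
  then have "k + 1 \<in> C" "k + 3 \<in> C" using min_path_vertex_cover_gap_iff by blast+
  then have "C = (C - {k + 1, k + 3}) \<union> {k + 1, k + 3}" by blast
  with C show "\<exists>D. min_path_vertex_cover k D \<and> C = D \<union> {k + 1, k + 3}"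
    using min_path_vertex_cover_restrict by blast
next
  assume "\<exists>D. min_path_vertex_cover k D \<and> C = D \<union> {k + 1, k + 3}"
  then obtain D where D: "min_path_vertex_cover k D" "C = D \<union> {k + 1, k + 3}" by blast
  have "k + 2 \<notin> D" using min_path_vertex_cover_subset[OF D(1)] by auto
  with D show "min_path_vertex_cover (k + 3) C \<and> k + 2 \<notin> C"
    using min_path_vertex_cover_extend by auto
qed

lemma mset_set_union_top:
  fixes k :: nat
  assumes "D \<subseteq> {1..k}"
  shows "mset_set (D \<union> {k + 1, k + 3}) = {#k + 1, k + 3#} + mset_set D"
proof -
  have "finite D" "k + 1 \<notin> D" "k + 3 \<notin> D"
    using assms finite_subset by fastforce+
  moreover have "D \<union> {k + 1, k + 3} = insert (k + 1) (insert (k + 3) D)" by blast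
  ultimately show ?thesis by simp
qed

lemma path_cover_monomials_avoiding_iff:
  "c \<in> path_cover_monomials (k + 3) \<and> k + 2 \<notin># c \<longleftrightarrow>
    c \<in> (+) {#k + 1, k + 3#} ` path_cover_monomials k"
proof -
  have finite_cover: "finite C" if "min_path_vertex_cover m C" for m C
    using min_path_vertex_cover_subset[OF that] finite_subset by blast
  have "c \<in> path_cover_monomials (k + 3) \<and> k + 2 \<notin># c \<longleftrightarrow>
      (\<exists>C. (min_path_vertex_cover (k + 3) C \<and> k + 2 \<notin> C) \<and> c = mset_set C)"
    unfolding path_cover_monomials_def using finite_cover by auto
  also have "\<dots> \<longleftrightarrow> (\<exists>D. min_path_vertex_cover k D \<and> c = mset_set (D \<union> {k + 1, k + 3}))"
    unfolding min_path_vertex_cover_avoiding_iff by blast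
  also have "\<dots> \<longleftrightarrow> (\<exists>D. min_path_vertex_cover k D \<and> c = {#k + 1, k + 3#} + mset_set D)"
  proof (intro ex_cong1 conj_cong refl)
    fix D assume "min_path_vertex_cover k D"
    then have "mset_set (D \<union> {k + 1, k + 3}) = {#k + 1, k + 3#} + mset_set D"
      by (intro mset_set_union_top min_path_vertex_cover_subset)
    then show "c = mset_set (D \<union> {k + 1, k + 3}) \<longleftrightarrow> c = {#k + 1, k + 3#} + mset_set D"
      by (simp only:)
  qed
  also have "\<dots> \<longleftrightarrow> c \<in> (+) {#k + 1, k + 3#} ` path_cover_monomials k"
    unfolding path_cover_monomials_def by auto
  finally show ?thesis .
qed

lemma pair_sums_path_cover_monomials_top:
  assumes "t \<in> pair_sums (path_cover_monomials (k + 3))"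
    and "{#k + 1, k + 3#} + {#k + 1, k + 3#} \<subseteq># t"
  shows "k + 2 \<notin># t"
proof -
  obtain C\<^sub>1 C\<^sub>2 where C: "min_path_vertex_cover (k + 3) C\<^sub>1" "min_path_vertex_cover (k + 3) C\<^sub>2"
    and t: "t = mset_set C\<^sub>1 + mset_set C\<^sub>2"
    using assms(1) unfolding pair_sums_def path_cover_monomials_def by blast
  have finite_C: "finite C\<^sub>1" "finite C\<^sub>2"
    using C min_path_vertex_cover_subset finite_subset by blast+
  have "y \<in> C\<^sub>1 \<and> y \<in> C\<^sub>2" if "y \<in> {k + 1, k + 3}" for y
  proof -
    have "2 \<le> count t y"
      using mset_subset_eq_count[OF assms(2), of y] that by auto
    then show ?thesis unfolding t by (auto simp: count_mset_set' split: if_splits)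
  qed
  then have "k + 2 \<notin> C\<^sub>1" "k + 2 \<notin> C\<^sub>2"
    using C min_path_vertex_cover_gap_iff by blast+
  with finite_C show ?thesis unfolding t by simp
qed

theorem lemma3p9:
  fixes n :: nat and U :: monomial
  assumes "n \<ge> 5"
  shows "{#n, n, n - 2, n - 2#} + U \<in> mingens (ideal_square (cover_ideal_path n))
     \<longleftrightarrow> U \<in> mingens (ideal_square (cover_ideal_path (n - 3)))"
proof -
  define k where "k = n - 3"
  have n: "n = k + 3" using assms unfolding k_def by simp
  have square: "{#n, n, n - 2, n - 2#} = {#k + 1, k + 3#} + {#k + 1, k + 3#}"
    using n by (simp add: add_mset_commute)
  have "{#k + 1, k + 3#} + {#k + 1, k + 3#} + U
      \<in> mingens (pair_sums (path_cover_monomials (k + 3)))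
    \<longleftrightarrow> U \<in> mingens (pair_sums (path_cover_monomials k))"
    using pair_sums_avoiding[OF path_cover_monomials_avoiding_iff]
      pair_sums_path_cover_monomials_top
    by (rule mingens_translate)
  then show ?thesis
    unfolding square mingens_square_cover_ideal_path k_def[symmetric]
    unfolding n .
qed

end
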